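(* Let $m,k\in\mathbb{N}$ and let $\alpha,\beta\in\mathbb{C}$ with $\alpha,\beta,1+\alpha+\beta+k\notin\mathbb{Z}_0^-$. Then \[ {}_3F_2\left[\begin{array}{r} -m,\ \alpha,\ \beta;\\ -m-k,\ 1+\alpha+\beta+k;\end{array}1\right]_m=\frac{\left(1+\alpha+k\right)_m\left(1+\beta+k\right)_m}{\left(1+k\right)_m\left(1+\alpha+\beta+k\right)_m}. \]
   Context: $\mathbb{N}=\{1,2,3,\dots\}$, $\mathbb{Z}_0^-=\{0,-1,-2,\dots\}$. For $a\in\mathbb{C}$ and $n\in\mathbb{N}_0$, $(a)_0=1$ and $(a)_n=a(a+1)\cdots(a+n-1)$. For $N\in\mathbb{N}_0$, ${}_3F_2\left[\begin{array}{r} a_1,a_2,a_3;\\ b_1,b_2;\end{array}z\right]_N=\sum_{n=0}^{N}\frac{(a_1)_n(a_2)_n(a_3)_n}{(b_1)_n(b_2)_n}\frac{z^n}{n!}$ (the sum of the first $N+1$ terms), defined whenever $(b_1)_n(b_2)_n\neq0$ for $0\le n\le N$. *)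

theory Defs
  imports Complex_Main
begin

definition hyp3F2_trunc ::
  "complex \<Rightarrow> complex \<Rightarrow> complex \<Rightarrow> complex \<Rightarrow> complex \<Rightarrow> complex \<Rightarrow> nat \<Rightarrow> complex" where
  "hyp3F2_trunc a1 a2 a3 b1 b2 z N =
     (\<Sum>n=0..N. pochhammer a1 n * pochhammer a2 n * pochhammer a3 n /
                 (pochhammer b1 n * pochhammer b2 n) * z ^ n / of_nat (fact n))"

end

(* Multiplying the truncated series by (1 + k)_m (1 + \<alpha> + \<beta> + k)_m clears all denominators and
   leaves, with e = 1 + k, the polynomial
     S_n(e) = sum_j (n choose j) (a)_j (b)_j (a + b + e + j)_(n-j) (e)_(n-j).
   Pascal's rule writes S_(n+1)(e) as a sum over pairs of adjacent terms, and each pair equals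
   (a + e)(b + e) times the j-th term of S_n(e + 1) up to a difference G(j) - G(j + 1) whose sum
   telescopes to 0. Hence S_(n+1)(e) = (a + e)(b + e) S_n(e + 1), and by induction
   S_n(e) = (a + e)_n (b + e)_n: this is the Pfaff-Saalschuetz summation. *)
theory Submission
  imports Defs
begin

definition saalschuetz_term :: "nat \<Rightarrow> 'a \<Rightarrow> 'a \<Rightarrow> 'a \<Rightarrow> nat \<Rightarrow> 'a::comm_semiring_1" where
  "saalschuetz_term n a b e j =
     pochhammer a j * pochhammer b j * pochhammer (a + b + e + of_nat j) (n - j) * pochhammer e (n - j)"

definition saalschuetz_certificate :: "nat \<Rightarrow> 'a \<Rightarrow> 'a \<Rightarrow> 'a \<Rightarrow> nat \<Rightarrow> 'a::comm_semiring_1" where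
  "saalschuetz_certificate n a b e j =
     of_nat j * (a + b + e + of_nat j) * of_nat (n choose j) * saalschuetz_term n a b (e + 1) j"

lemma saalschuetz_term_telescoping:
  fixes a b e :: "'a::idom"
  assumes "j \<le> n"
  shows "of_nat (n choose j) * (saalschuetz_term (Suc n) a b e j + saalschuetz_term (Suc n) a b e (Suc j))
       = (a + e) * (b + e) * (of_nat (n choose j) * saalschuetz_term n a b (e + 1) j)
         + saalschuetz_certificate n a b e j - saalschuetz_certificate n a b e (Suc j)"
proof (cases "j = n")
  case True
  have binom: "n choose Suc n = 0"
    by (simp add: binomial_eq_0)
  show ?thesis
    unfolding True saalschuetz_term_def saalschuetz_certificate_def binom
    by (simp add: pochhammer_Suc) algebra
next
  case False
  with assms have "j < n" by simp
  then obtain r where n: "n = j + Suc r"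
    by (auto simp: less_iff_Suc_add)
  define s where "s = a + b + e + of_nat j"
  have binom: "of_nat (Suc j) * of_nat (n choose Suc j) = (of_nat (Suc r) * of_nat (n choose j) :: 'a)"
  proof -
    have "Suc j * (n choose Suc j) = (n - j) * (n choose j)"
      by (simp only: binomial_absorption binomial_absorb_comp)
    then show ?thesis
      using n by (metis of_nat_mult diff_add_inverse)
  qed
  have idx: "Suc n - j = Suc (Suc r)" "n - j = Suc r" "n - Suc j = r" "Suc n - Suc j = Suc r"
    using n by simp_all
  have shift: "a + b + e + of_nat (Suc j) = s + 1" "a + b + (e + 1) + of_nat j = s + 1"
    "a + b + (e + 1) + of_nat (Suc j) = s + 2"
    by (simp_all add: s_def algebra_simps)
  have poch: "pochhammer s (Suc (Suc r)) = s * ((s + 1) * pochhammer (s + 2) r)"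
    "pochhammer (s + 1) (Suc r) = (s + 1) * pochhammer (s + 2) r"
    by (simp_all add: pochhammer_rec algebra_simps)
  have poch_e: "pochhammer e (Suc (Suc r)) = e * (pochhammer (e + 1) r * (e + 1 + of_nat r))"
    using pochhammer_rec[of e "Suc r"] pochhammer_Suc[of "e + 1" r] by simp
  show ?thesis
    unfolding saalschuetz_term_def saalschuetz_certificate_def idx shift s_def[symmetric] poch poch_e
      pochhammer_Suc[of a j] pochhammer_Suc[of b j] pochhammer_rec[of e r] pochhammer_Suc[of "e + 1" r]
    using binom s_def unfolding of_nat_Suc
    by algebra
qed

lemma sum_binomial_Suc_pascal:
  fixes f :: "nat \<Rightarrow> 'a::comm_semiring_1"
  shows "(\<Sum>j\<le>Suc n. of_nat (Suc n choose j) * f j) = (\<Sum>j\<le>n. of_nat (n choose j) * (f j + f (Suc j)))"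
proof -
  have shift: "f 0 + (\<Sum>j\<le>n. of_nat (n choose Suc j) * f (Suc j)) = (\<Sum>j\<le>n. of_nat (n choose j) * f j)"
    using sum.atMost_Suc_shift[of "\<lambda>j. of_nat (n choose j) * f j" n] by (simp add: binomial_eq_0)
  have "(\<Sum>j\<le>Suc n. of_nat (Suc n choose j) * f j)
      = (f 0 + (\<Sum>j\<le>n. of_nat (n choose Suc j) * f (Suc j))) + (\<Sum>j\<le>n. of_nat (n choose j) * f (Suc j))"
    by (simp add: sum.atMost_Suc_shift sum.distrib algebra_simps del: sum.atMost_Suc)
  then show ?thesis
    by (simp only: shift distrib_left sum.distrib)
qed

lemma saalschuetz_sum_Suc:
  fixes a b e :: "'a::idom"
  shows "(\<Sum>j\<le>Suc n. of_nat (Suc n choose j) * saalschuetz_term (Suc n) a b e j)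
       = (a + e) * (b + e) * (\<Sum>j\<le>n. of_nat (n choose j) * saalschuetz_term n a b (e + 1) j)"
proof -
  let ?G = "saalschuetz_certificate n a b e"
  have "(\<Sum>j\<le>Suc n. of_nat (Suc n choose j) * saalschuetz_term (Suc n) a b e j)
      = (\<Sum>j\<le>n. (a + e) * (b + e) * (of_nat (n choose j) * saalschuetz_term n a b (e + 1) j)
                  + (?G j - ?G (Suc j)))"
    unfolding sum_binomial_Suc_pascal
    by (intro sum.cong refl) (simp add: saalschuetz_term_telescoping)
  also have "\<dots> = (a + e) * (b + e) * (\<Sum>j\<le>n. of_nat (n choose j) * saalschuetz_term n a b (e + 1) j)
                   + (?G 0 - ?G (Suc n))"
    by (simp only: sum.distrib sum_distrib_left sum_telescope)
  also have "?G 0 - ?G (Suc n) = 0"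
    by (simp add: saalschuetz_certificate_def binomial_eq_0)
  finally show ?thesis
    by simp
qed

lemma saalschuetz_sum:
  fixes a b e :: "'a::idom"
  shows "(\<Sum>j\<le>n. of_nat (n choose j) * saalschuetz_term n a b e j) = pochhammer (a + e) n * pochhammer (b + e) n"
proof (induction n arbitrary: e)
  case 0
  then show ?case
    by (simp add: saalschuetz_term_def)
next
  case (Suc n)
  then show ?case
    by (simp add: saalschuetz_sum_Suc pochhammer_rec algebra_simps del: sum.atMost_Suc)
qed

lemma pochhammer_neg_of_nat:
  "pochhammer (- of_nat m :: 'a::field_char_0) j = (-1) ^ j * of_nat (m choose j) * fact j"
proof -
  have "(-1) ^ j * of_nat (m choose j) * fact j = ((-1) ^ j * (-1) ^ j) * pochhammer (- of_nat m :: 'a) j"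
    by (simp add: binomial_gbinomial gbinomial_pochhammer)
  also have "(-1) ^ j * (-1) ^ j = (1 :: 'a)"
    by (simp flip: power_mult_distrib)
  finally show ?thesis
    by simp
qed

lemma pochhammer_one_minus_of_nat:
  fixes e :: "'a::comm_ring_1"
  assumes "j \<le> m"
  shows "pochhammer (1 - e - of_nat m) j = (-1) ^ j * pochhammer (e + of_nat (m - j)) j"
  using pochhammer_minus[of "e + of_nat m - 1" j] assms
  by (simp add: of_nat_diff algebra_simps)

lemma hyp3F2_term_saalschuetz:
  fixes a b e :: complex
  assumes "j \<le> m" and "pochhammer e m \<noteq> 0" and "pochhammer (a + b + e) m \<noteq> 0"
  shows "pochhammer (- of_nat m) j * pochhammer a j * pochhammer b j /
           (pochhammer (1 - e - of_nat m) j * pochhammer (a + b + e) j) * 1 ^ j / of_nat (fact j)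
       = of_nat (m choose j) * saalschuetz_term m a b e j / (pochhammer e m * pochhammer (a + b + e) m)"
proof -
  have e_split: "pochhammer e m = pochhammer e (m - j) * pochhammer (e + of_nat (m - j)) j"
    using pochhammer_product'[of e "m - j" j] assms(1) by simp
  have c_split: "pochhammer (a + b + e) m = pochhammer (a + b + e) j * pochhammer (a + b + e + of_nat j) (m - j)"
    using pochhammer_product[OF assms(1)] .
  have nonzero: "pochhammer e (m - j) \<noteq> 0" "pochhammer (e + of_nat (m - j)) j \<noteq> 0"
      "pochhammer (a + b + e) j \<noteq> 0" "pochhammer (a + b + e + of_nat j) (m - j) \<noteq> 0"
    using assms(2,3) unfolding e_split c_split by auto
  show ?thesis
    unfolding pochhammer_neg_of_nat pochhammer_one_minus_of_nat[OF assms(1)] saalschuetz_term_def e_split c_split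
    using nonzero by (simp add: field_simps)
qed

lemma hyp3F2_trunc_saalschuetz:
  fixes a b e :: complex
  assumes "pochhammer e m \<noteq> 0" and "pochhammer (a + b + e) m \<noteq> 0"
  shows "hyp3F2_trunc (- of_nat m) a b (1 - e - of_nat m) (a + b + e) 1 m
       = pochhammer (a + e) m * pochhammer (b + e) m / (pochhammer e m * pochhammer (a + b + e) m)"
proof -
  have "hyp3F2_trunc (- of_nat m) a b (1 - e - of_nat m) (a + b + e) 1 m
      = (\<Sum>j\<le>m. of_nat (m choose j) * saalschuetz_term m a b e j) / (pochhammer e m * pochhammer (a + b + e) m)"
    unfolding hyp3F2_trunc_def atMost_atLeast0[symmetric] sum_divide_distrib
    using assms by (intro sum.cong refl hyp3F2_term_saalschuetz) simp_all
  then show ?thesis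
    by (simp add: saalschuetz_sum)
qed

theorem mainTheorem3:
  fixes m k :: nat and \<alpha> \<beta> :: complex
  assumes "m \<ge> 1" and "k \<ge> 1"
    and "\<forall>j::nat. \<alpha> \<noteq> - of_nat j"
    and "\<forall>j::nat. \<beta> \<noteq> - of_nat j"
    and "\<forall>j::nat. 1 + \<alpha> + \<beta> + of_nat k \<noteq> - of_nat j"
  shows "hyp3F2_trunc (- of_nat m) \<alpha> \<beta> (- of_nat m - of_nat k) (1 + \<alpha> + \<beta> + of_nat k) 1 m
         = pochhammer (1 + \<alpha> + of_nat k) m * pochhammer (1 + \<beta> + of_nat k) m /
           (pochhammer (1 + of_nat k) m * pochhammer (1 + \<alpha> + \<beta> + of_nat k) m)"
proof -
  define e :: complex where "e = 1 + of_nat k"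
  have "pochhammer e m = of_nat (pochhammer (Suc k) m)"
    by (simp add: e_def flip: pochhammer_of_nat)
  moreover have "pochhammer (Suc k) m > 0"
    by (rule pochhammer_pos) simp
  ultimately have "pochhammer e m \<noteq> 0"
    by simp
  moreover have "pochhammer (\<alpha> + \<beta> + e) m \<noteq> 0"
    using assms(5) by (auto simp: e_def pochhammer_eq_0_iff add_ac)
  moreover have params: "1 - e - of_nat m = - of_nat m - of_nat k" "\<alpha> + \<beta> + e = 1 + \<alpha> + \<beta> + of_nat k"
    "\<alpha> + e = 1 + \<alpha> + of_nat k" "\<beta> + e = 1 + \<beta> + of_nat k"
    by (simp_all add: e_def algebra_simps)
  ultimately show ?thesis
    using hyp3F2_trunc_saalschuetz[of e m \<alpha> \<beta>] unfolding params by (simp add: e_def)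
qed

end
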